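(* For every $1\leq k\leq n$, $c_{S^{n-k}}\geq\exp(-e^{54+5n})$, where $S^{n-k}$ denotes the unit sphere of $\mathbb{R}^{n-k+1}$, viewed as a codimension-$k$ submanifold of $\mathbb{R}^n\supset\mathbb{R}^{n-k+1}$.
   Context: For a closed codimension-$k$ submanifold $\Sigma\subset\mathbb{R}^n$: a pair $(U,P)$ ($U\subset\mathbb{R}^n$ bounded open, $P=(P_1,\dots,P_k)\in\mathbb{R}[x_1,\dots,x_n]^k$) is regular if $0$ is a regular value of $P|_U$ and $P^{-1}(0)\cap U$ is compact; $\|P\|_{L^2}^2=\sum_i\int_{\mathbb{C}^n}|P_i(z)|^2e^{-\pi|z|^2}dz$; $\mathcal{T}_{(U,P)}$ is the set of $(\delta,\epsilon)\in(0,\infty)^2$ such that some compact $K\subset U$ has $\inf_{U\setminus K}|P|>\delta$, and $|(d_yP)^*(w)|\geq\epsilon|w|$ for all $w\in\mathbb{R}^k$ whenever $y\in U$, $|P(y)|<\delta$ ($^*$ = adjoint); $R_{(U,P)}=\max(1,\sup_U|y|)$; $\rho_R=\inf_{s>0}\frac{(R+s)^{2n}}{s^{2n}}e^{\pi(R+s)^2}$; $\tau_{(U,P)}=24k\rho_{R_{(U,P)}}\|P\|_{L^2}^2\inf_{\mathcal{T}_{(U,P)}}(\delta^{-2}+\pi n\epsilon^{-2})$; $m_\tau=\sup_{a\geq\sqrt\tau}\frac{1}{\sqrt\pi}(1-\frac{\tau}{a^2})\int_a^\infty e^{-t^2}dt$; $\mathcal{I}_\Sigma$ is the set of regular pairs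 such that $P^{-1}(0)\cap U$ contains a subset isotopic to $\Sigma$ in $\mathbb{R}^n$; $c_\Sigma=\sup_{(U,P)\in\mathcal{I}_\Sigma}m_{\tau_{(U,P)}}/(2^n\mathrm{Vol}(B(R_{(U,P)})))$ if $\Sigma$ has trivial normal bundle, $c_\Sigma=0$ otherwise; $\mathrm{Vol}(B(R))$ is the volume of the Euclidean ball of radius $R$ in $\mathbb{R}^n$. *)

theory Defs
  imports "HOL-Analysis.Analysis"
begin

type_synonym 'n mpoly_coeffs = "('n \<Rightarrow> nat) \<Rightarrow> real"

definition is_mpoly :: "'n mpoly_coeffs \<Rightarrow> bool" where
  "is_mpoly c \<longleftrightarrow> finite {\<alpha>. c \<alpha> \<noteq> 0}"

definition mpoly_eval :: "('n::finite) mpoly_coeffs \<Rightarrow> real^'n \<Rightarrow> real" where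
  "mpoly_eval c x = (\<Sum>\<alpha>\<in>{\<alpha>. c \<alpha> \<noteq> 0}. c \<alpha> * (\<Prod>i\<in>UNIV. (x $ i) ^ (\<alpha> i)))"

definition mpoly_ceval :: "('n::finite) mpoly_coeffs \<Rightarrow> complex^'n \<Rightarrow> complex" where
  "mpoly_ceval c z = (\<Sum>\<alpha>\<in>{\<alpha>. c \<alpha> \<noteq> 0}. complex_of_real (c \<alpha>) * (\<Prod>i\<in>UNIV. (z $ i) ^ (\<alpha> i)))"

text \<open>A k-tuple P = (P_0,...,P_{k-1}) is a function nat => coefficients; only indices < k matter.
  Vectors of R^k are functions nat => real (indices < k).\<close>

definition knorm :: "nat \<Rightarrow> (nat \<Rightarrow> real) \<Rightarrow> real" where
  "knorm k w = sqrt (\<Sum>i<k. (w i)\<^sup>2)"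

definition Pval :: "nat \<Rightarrow> (nat \<Rightarrow> ('n::finite) mpoly_coeffs) \<Rightarrow> real^'n \<Rightarrow> (nat \<Rightarrow> real)" where
  "Pval k P y = (\<lambda>i. if i < k then mpoly_eval (P i) y else 0)"

definition zero_set :: "nat \<Rightarrow> (nat \<Rightarrow> ('n::finite) mpoly_coeffs) \<Rightarrow> (real^'n) set \<Rightarrow> (real^'n) set" where
  "zero_set k P U = {y\<in>U. \<forall>i<k. mpoly_eval (P i) y = 0}"

text \<open>gradient of a polynomial; (d_y P)^* w = sum_i w_i grad P_i(y)\<close>
definition mpoly_grad :: "('n::finite) mpoly_coeffs \<Rightarrow> real^'n \<Rightarrow> real^'n" where
  "mpoly_grad c y = (\<chi> j. frechet_derivative (mpoly_eval c) (at y) (axis j 1))"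

definition dP_adj :: "nat \<Rightarrow> (nat \<Rightarrow> ('n::finite) mpoly_coeffs) \<Rightarrow> real^'n \<Rightarrow> (nat \<Rightarrow> real) \<Rightarrow> real^'n" where
  "dP_adj k P y w = (\<Sum>i<k. w i *\<^sub>R mpoly_grad (P i) y)"

definition regular_pair :: "nat \<Rightarrow> (real^'n::finite) set \<Rightarrow> (nat \<Rightarrow> 'n mpoly_coeffs) \<Rightarrow> bool" where
  "regular_pair k U P \<longleftrightarrow>
     open U \<and> bounded U \<and> (\<forall>i<k. is_mpoly (P i)) \<and>
     compact (zero_set k P U) \<and>
     (\<forall>y\<in>zero_set k P U. \<forall>w::nat\<Rightarrow>real. \<exists>h::real^'n.
         \<forall>i<k. frechet_derivative (mpoly_eval (P i)) (at y) h = w i)"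

definition L2sq :: "nat \<Rightarrow> (nat \<Rightarrow> ('n::finite) mpoly_coeffs) \<Rightarrow> real" where
  "L2sq k P = (\<Sum>i<k. \<integral>z. (cmod (mpoly_ceval (P i) z))\<^sup>2 * exp (- pi * (norm z)\<^sup>2) \<partial>(lborel :: (complex^'n) measure))"

text \<open>inf_{U - K} |P| > delta is expressed as: some delta' > delta bounds |P| from below on U - K
  (so that an empty U - K is allowed, inf over the empty set being +infinity).\<close>
definition Tset :: "nat \<Rightarrow> (real^'n::finite) set \<Rightarrow> (nat \<Rightarrow> 'n mpoly_coeffs) \<Rightarrow> (real \<times> real) set" where
  "Tset k U P = {(\<delta>, \<epsilon>). \<delta> > 0 \<and> \<epsilon> > 0 \<and>
      (\<exists>K. compact K \<and> K \<subseteq> U \<and> (\<exists>\<delta>'>\<delta>. \<forall>y\<in>U - K. knorm k (Pval k P y) \<ge> \<delta>')) \<and>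
      (\<forall>y\<in>U. knorm k (Pval k P y) < \<delta> \<longrightarrow>
          (\<forall>w::nat\<Rightarrow>real. norm (dP_adj k P y w) \<ge> \<epsilon> * knorm k w))}"

definition Rpair :: "(real^'n::finite) set \<Rightarrow> real" where
  "Rpair U = max 1 (SUP y\<in>U. norm y)"

definition rho :: "nat \<Rightarrow> real \<Rightarrow> real" where
  "rho n R = (INF s\<in>{0<..}. (R + s) ^ (2*n) / s ^ (2*n) * exp (pi * (R + s)\<^sup>2))"

definition tau :: "nat \<Rightarrow> (real^'n::finite) set \<Rightarrow> (nat \<Rightarrow> 'n mpoly_coeffs) \<Rightarrow> real" where
  "tau k U P = 24 * real k * rho CARD('n) (Rpair U) * L2sq k P *
      (INF p\<in>Tset k U P. 1 / (fst p)\<^sup>2 + pi * real CARD('n) / (snd p)\<^sup>2)"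

definition m_tau :: "real \<Rightarrow> real" where
  "m_tau \<tau> = (SUP a\<in>{sqrt \<tau>..}. (1 / sqrt pi) * (1 - \<tau> / a\<^sup>2) * integral {a..} (\<lambda>t. exp (- t\<^sup>2)))"

fun Ck :: "nat \<Rightarrow> ('a::euclidean_space \<Rightarrow> 'b::euclidean_space) \<Rightarrow> bool" where
  "Ck 0 f = continuous_on UNIV f"
| "Ck (Suc m) f = ((\<forall>x. f differentiable (at x)) \<and> (\<forall>v. Ck m (\<lambda>x. frechet_derivative f (at x) v)))"

definition smooth_map :: "('a::euclidean_space \<Rightarrow> 'b::euclidean_space) \<Rightarrow> bool" where
  "smooth_map f \<longleftrightarrow> (\<forall>m. Ck m f)"

definition ambient_isotopic :: "(real^'n::finite) set \<Rightarrow> (real^'n) set \<Rightarrow> bool" where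
  "ambient_isotopic S A \<longleftrightarrow>
     (\<exists>H :: (real \<times> (real^'n)) \<Rightarrow> (real^'n).
        smooth_map H \<and>
        (\<forall>t. bij (\<lambda>x. H (t, x)) \<and> smooth_map (inv (\<lambda>x. H (t, x)))) \<and>
        (\<forall>x. H (0, x) = x) \<and> (\<lambda>x. H (1, x)) ` S = A)"

definition I_set :: "nat \<Rightarrow> (real^'n::finite) set \<Rightarrow> ((real^'n) set \<times> (nat \<Rightarrow> 'n mpoly_coeffs)) set" where
  "I_set k \<Sigma> = {(U, P). regular_pair k U P \<and> (\<exists>A \<subseteq> zero_set k P U. ambient_isotopic \<Sigma> A)}"

text \<open>c_Sigma for a codimension-k submanifold with trivial normal bundle (as the spheres below are).
  Pairs with empty T contribute tau = +infinity, hence nothing positive; they are omitted.\<close>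
definition c_Sigma :: "nat \<Rightarrow> (real^'n::finite) set \<Rightarrow> ereal" where
  "c_Sigma k \<Sigma> = (SUP UP\<in>{UP \<in> I_set k \<Sigma>. Tset k (fst UP) (snd UP) \<noteq> {}}.
      ereal (m_tau (tau k (fst UP) (snd UP)) /
             (2 ^ CARD('n) * measure lborel (ball (0::real^'n) (Rpair (fst UP))))))"

definition coord_sphere :: "'n set \<Rightarrow> (real^'n::finite) set" where
  "coord_sphere J = {x. norm x = 1 \<and> (\<forall>i. i \<notin> J \<longrightarrow> x $ i = 0)}"

end

theory Submission
  imports Defs "HOL-Probability.Distributions"
begin

text \<open>The sphere \<open>S\<^sup>n\<^sup>-\<^sup>k\<close> is cut out inside \<open>U = B(0, 2)\<close> by the explicit polynomials
  \<open>P\<^sub>0 = |x\<^sub>J|\<^sup>2 - 1\<close> and \<open>P\<^sub>i = x\<^sub>e\<^sub>(\<^sub>i\<^sub>)\<close>, where \<open>e\<close> enumerates the \<open>k - 1\<close> coordinates outside \<open>J\<close>.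
  This pair is regular, and \<open>(\<delta>, \<epsilon>) = (1/4, 1)\<close> is admissible: outside \<open>B(0, 3/2)\<close> we have \<open>|P| \<ge> 1/2\<close>,
  and where \<open>|P| < 1/4\<close> the gradient of \<open>P\<^sub>0\<close> has length \<open>> 1\<close> and is orthogonal to the other
  (unit, pairwise orthogonal) gradients. Each \<open>|P\<^sub>i|\<close> is at most \<open>|z|\<^sup>2 + 1 \<le> e\<^bsup>|z|\<^sup>2\<^esup>\<close>, so its
  Gaussian \<open>L\<^sup>2\<close> norm is at most \<open>\<pi>\<^sup>n\<close>, and \<open>\<rho>\<^sub>R\<close> is bounded by its value at \<open>s = 1\<close>. This makes
  \<open>\<tau> = O(n\<^sup>3 36\<^sup>n)\<close>; evaluating the supremum defining \<open>m\<^sub>\<tau>\<close> at \<open>a = \<surd>(2\<tau> + 1)\<close> gives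
  \<open>m\<^sub>\<tau> \<ge> e\<^bsup>-4\<tau>-4\<^esup>/(2\<surd>\<pi>)\<close>, and the claim follows since the ball has volume at most \<open>4\<^sup>n\<close>.\<close>

lemma Ck_const: "Ck m (\<lambda>x::'a::euclidean_space. c::'b::euclidean_space)"
proof (induction m arbitrary: c)
  case 0 then show ?case by simp
next
  case (Suc m)
  have "frechet_derivative (\<lambda>x::'a. c) (at x) = (\<lambda>v. 0)" for x
    by (metis frechet_derivative_at has_derivative_const)
  then show ?case using Suc by simp
qed

lemma Ck_bounded_linear:
  assumes "bounded_linear (f::'a::euclidean_space \<Rightarrow> 'b::euclidean_space)"
  shows "Ck m f"
proof (cases m)
  case 0 then show ?thesis using assms by (simp add: linear_continuous_on)
next
  case Suc
  have "frechet_derivative f (at x) = f" for x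
    by (metis frechet_derivative_at bounded_linear_imp_has_derivative assms)
  then show ?thesis using Suc assms by (simp add: Ck_const bounded_linear_imp_differentiable)
qed

lemma ambient_isotopic_refl: "ambient_isotopic (S::(real^'n::finite) set) S"
  unfolding ambient_isotopic_def smooth_map_def
  by (rule exI[of _ snd]) (simp add: Ck_bounded_linear bounded_linear_snd bounded_linear_ident bij_id[unfolded id_def])

section \<open>Gaussian integrals\<close>

lemma gaussian_integral_real: "has_bochner_integral lborel (\<lambda>x::real. exp (- x\<^sup>2)) (sqrt pi)"
  using has_bochner_integral_even_function[OF gaussian_moment_even_pos[where k=0]] by simp

lemma gaussian_integral_euclidean:
  "has_bochner_integral lborel (\<lambda>z::'a::euclidean_space. exp (- (norm z)\<^sup>2)) (sqrt pi ^ DIM('a))"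
proof -
  have line: "(\<integral>\<^sup>+x. ennreal (exp (- x\<^sup>2)) \<partial>lborel) = ennreal (sqrt pi)"
    using gaussian_integral_real
    by (metis has_bochner_integral_iff nn_integral_eq_integral AE_I2 exp_ge_zero)
  have product: "ennreal (exp (- (norm z)\<^sup>2)) = (\<Prod>b\<in>Basis. ennreal (exp (- (z \<bullet> b)\<^sup>2)))"
    for z :: 'a
  proof -
    have "(norm z)\<^sup>2 = (\<Sum>b\<in>Basis. (z \<bullet> b)\<^sup>2)"
      by (simp add: norm_eq_sqrt_inner euclidean_inner[of z z] power2_eq_square sum_nonneg)
    then show ?thesis
      by (simp add: exp_sum[symmetric] sum_negf prod_ennreal)
  qed
  have nn: "(\<integral>\<^sup>+z. ennreal (exp (- (norm z)\<^sup>2)) \<partial>(lborel::'a measure)) = ennreal (sqrt pi ^ DIM('a))"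
    unfolding product
    by (subst nn_integral_lborel_prod[where f="\<lambda>b x. ennreal (exp (- x\<^sup>2))"])
       (auto simp: line prod_ennreal ennreal_power)
  have int: "integrable lborel (\<lambda>z::'a. exp (- (norm z)\<^sup>2))"
    by (rule integrableI_nn_integral_finite[OF _ _ nn]) auto
  then show ?thesis
    using nn_integral_eq_integral[OF int] nn by (auto simp: has_bochner_integral_iff)
qed

lemma gaussian_weighted_L2_le:
  fixes f :: "'a::euclidean_space \<Rightarrow> 'b::real_normed_vector"
  assumes f_le: "\<And>z. norm (f z) \<le> (norm z)\<^sup>2 + 1"
  shows "(\<integral>z. (norm (f z))\<^sup>2 * exp (- pi * (norm z)\<^sup>2) \<partial>lborel) \<le> sqrt pi ^ DIM('a)"
proof -
  let ?F = "\<lambda>z::'a. (norm (f z))\<^sup>2 * exp (- pi * (norm z)\<^sup>2)"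
  let ?g = "\<lambda>z::'a. exp (- (norm z)\<^sup>2)"
  have F_le_g: "?F z \<le> ?g z" for z
  proof -
    let ?t = "(norm z)\<^sup>2"
    have "norm (f z) \<le> exp ?t"
      using f_le[of z] exp_ge_add_one_self[of ?t] by (simp add: add.commute del: exp_ge_add_one_self)
    then have "(norm (f z))\<^sup>2 \<le> exp (2 * ?t)"
      using power_mono[of "norm (f z)" "exp ?t" 2] by (simp add: exp_double[symmetric])
    then have "?F z \<le> exp (2 * ?t) * exp (- pi * ?t)"
      by (intro mult_right_mono) auto
    also have "\<dots> \<le> exp (- ?t)"
      using pi_gt3 mult_right_mono[of 3 pi ?t] by (simp add: exp_add[symmetric])
    finally show ?thesis .
  qed
  have "integral\<^sup>L lborel ?F \<le> integral\<^sup>L lborel ?g"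
  proof (cases "integrable lborel ?F")
    case True
    then show ?thesis
      using gaussian_integral_euclidean F_le_g by (intro integral_mono) (auto simp: has_bochner_integral_iff)
  next
    case False
    then show ?thesis by (simp add: not_integrable_integral_eq integral_nonneg_AE)
  qed
  then show ?thesis
    using gaussian_integral_euclidean[where 'a='a] by (simp add: has_bochner_integral_iff)
qed

lemma gaussian_has_integral_real: "((\<lambda>t. exp (- t\<^sup>2)) has_integral sqrt pi) (UNIV :: real set)"
proof -
  have "integrable lborel (\<lambda>t::real. exp (- t\<^sup>2))"
    using gaussian_integral_real by (simp add: has_bochner_integral_iff)
  from has_integral_integral_real[OF this] show ?thesis
    using gaussian_integral_real by (simp add: has_bochner_integral_iff)
qed

lemma gaussian_tail_integrable: "(\<lambda>t. exp (- t\<^sup>2)) integrable_on {a::real..}"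
proof -
  have "(\<lambda>t::real. exp (- t\<^sup>2)) absolutely_integrable_on UNIV"
    using absolutely_integrable_on_iff_nonneg[of UNIV "\<lambda>t::real. exp (- t\<^sup>2)"]
      has_integral_integrable[OF gaussian_has_integral_real] by simp
  then have "(\<lambda>t. exp (- t\<^sup>2)) absolutely_integrable_on {a..}"
    by (rule set_integrable_subset) auto
  then show ?thesis
    by (rule set_lebesgue_integral_eq_integral(1))
qed

lemma gaussian_tail_le: "integral {a::real..} (\<lambda>t. exp (- t\<^sup>2)) \<le> sqrt pi"
  using integral_subset_le[OF _ gaussian_tail_integrable has_integral_integrable[OF gaussian_has_integral_real], of a]
  by (simp add: integral_unique[OF gaussian_has_integral_real])

lemma gaussian_tail_ge:
  fixes a :: real
  assumes "0 \<le> a"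
  shows "exp (- (a + 1)\<^sup>2) \<le> integral {a..} (\<lambda>t. exp (- t\<^sup>2))"
proof -
  have cont: "(\<lambda>t. exp (- t\<^sup>2)) integrable_on {a..a + 1}"
    by (rule integrable_continuous_interval) (intro continuous_intros)
  have "integral {a..a + 1} (\<lambda>t. exp (- (a + 1)\<^sup>2)) \<le> integral {a..a + 1} (\<lambda>t. exp (- t\<^sup>2))"
  proof (rule integral_le[OF _ cont])
    show "(\<lambda>t. exp (- (a + 1)\<^sup>2)) integrable_on {a..a + 1}"
      by (rule integrable_continuous_interval) (rule continuous_on_const)
    fix t assume "t \<in> {a..a + 1}"
    then have "t\<^sup>2 \<le> (a + 1)\<^sup>2" using assms by (intro power_mono) auto
    then show "exp (- (a + 1)\<^sup>2) \<le> exp (- t\<^sup>2)" by simp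
  qed
  also have "\<dots> \<le> integral {a..} (\<lambda>t. exp (- t\<^sup>2))"
    by (rule integral_subset_le[OF _ cont gaussian_tail_integrable]) auto
  finally show ?thesis by simp
qed

lemma m_tau_integrand_le_1:
  assumes "0 \<le> \<tau>" "sqrt \<tau> \<le> a"
  shows "1 / sqrt pi * (1 - \<tau> / a\<^sup>2) * integral {a..} (\<lambda>t. exp (- t\<^sup>2)) \<le> 1"
proof -
  have "(sqrt \<tau>)\<^sup>2 \<le> a\<^sup>2"
    using assms by (intro power_mono) auto
  then have "\<tau> \<le> a\<^sup>2" using assms(1) by simp
  then have "0 \<le> 1 - \<tau> / a\<^sup>2" "1 - \<tau> / a\<^sup>2 \<le> 1"
    using assms(1) by (cases "a = 0"; simp add: divide_le_eq_1)+
  moreover have "0 \<le> integral {a..} (\<lambda>t. exp (- t\<^sup>2))"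
    by (rule integral_nonneg[OF gaussian_tail_integrable]) auto
  ultimately have "(1 - \<tau> / a\<^sup>2) * integral {a..} (\<lambda>t. exp (- t\<^sup>2)) \<le> 1 * sqrt pi"
    using gaussian_tail_le by (intro mult_mono) auto
  then show ?thesis by simp
qed

text \<open>Evaluate the supremum at \<open>a = sqrt (2 T + 1)\<close>, where \<open>1 - \<tau>/a\<^sup>2 \<ge> 1/2\<close> and \<open>(a + 1)\<^sup>2 \<le> 4 T + 4\<close>.\<close>
lemma m_tau_ge:
  assumes "0 \<le> \<tau>" "\<tau> \<le> T"
  shows "exp (- (4 * T + 4)) / (2 * sqrt pi) \<le> m_tau \<tau>"
proof -
  let ?g = "\<lambda>a. 1 / sqrt pi * (1 - \<tau> / a\<^sup>2) * integral {a..} (\<lambda>t. exp (- t\<^sup>2))"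
  define a where "a = sqrt (2 * T + 1)"
  have a_sq: "a\<^sup>2 = 2 * T + 1" and a_pos: "0 < a" and a_ge: "sqrt \<tau> \<le> a"
    using assms by (auto simp: a_def)
  have half: "1 / 2 \<le> 1 - \<tau> / a\<^sup>2"
    using assms by (simp add: a_sq field_simps)
  have "(a + 1)\<^sup>2 \<le> 2 * a\<^sup>2 + 2"
    using zero_le_power2[of "a - 1"] by (simp add: power2_eq_square algebra_simps)
  then have "exp (- (4 * T + 4)) \<le> exp (- (a + 1)\<^sup>2)"
    by (simp add: a_sq)
  also have "\<dots> \<le> integral {a..} (\<lambda>t. exp (- t\<^sup>2))"
    using gaussian_tail_ge a_pos by simp
  finally have "1 / 2 * exp (- (4 * T + 4)) \<le> (1 - \<tau> / a\<^sup>2) * integral {a..} (\<lambda>t. exp (- t\<^sup>2))"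
    by (rule mult_mono[OF half]) (use half in \<open>linarith, simp\<close>)
  then have "1 / 2 * exp (- (4 * T + 4)) / sqrt pi
      \<le> (1 - \<tau> / a\<^sup>2) * integral {a..} (\<lambda>t. exp (- t\<^sup>2)) / sqrt pi"
    by (rule divide_right_mono) simp
  then have "exp (- (4 * T + 4)) / (2 * sqrt pi) \<le> ?g a"
    by simp
  also have "?g a \<le> m_tau \<tau>"
    unfolding m_tau_def using assms(1) m_tau_integrand_le_1 a_ge
    by (intro cSUP_upper bdd_aboveI2[of _ _ 1]) auto
  finally show ?thesis .
qed

definition single_exponent :: "'n \<Rightarrow> nat \<Rightarrow> 'n \<Rightarrow> nat" where
  "single_exponent j d = (\<lambda>i. if i = j then d else 0)"

lemma prod_single_exponent:
  "(\<Prod>i\<in>UNIV. (x $ i) ^ single_exponent j d i) = (x::'a::comm_monoid_mult^'n::finite) $ j ^ d"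
proof -
  have "(\<Prod>i\<in>UNIV. (x $ i) ^ single_exponent j d i) = (\<Prod>i\<in>UNIV. if i = j then x $ i ^ d else 1)"
    by (rule prod.cong) (auto simp: single_exponent_def)
  then show ?thesis by (simp add: prod.delta)
qed

lemma single_exponent_eq_iff: "0 < d \<Longrightarrow> single_exponent j d = single_exponent j' d \<longleftrightarrow> j = j'"
  by (auto simp: single_exponent_def fun_eq_iff)

lemma single_exponent_neq_zero: "0 < d \<Longrightarrow> single_exponent j d \<noteq> (\<lambda>_. 0)"
  by (auto simp: single_exponent_def fun_eq_iff)

definition coord_poly :: "'n \<Rightarrow> 'n mpoly_coeffs" where
  "coord_poly j = (\<lambda>\<alpha>. if \<alpha> = single_exponent j 1 then 1 else 0)"

definition sphere_poly :: "'n set \<Rightarrow> 'n mpoly_coeffs" where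
  "sphere_poly J = (\<lambda>\<alpha>. if \<alpha> = (\<lambda>_. 0) then -1
      else if \<alpha> \<in> (\<lambda>j. single_exponent j 2) ` J then 1 else 0)"

lemma coord_poly_support: "{\<alpha>. coord_poly j \<alpha> \<noteq> 0} = {single_exponent j 1}"
  by (auto simp: coord_poly_def)

lemma sphere_poly_support:
  "{\<alpha>. sphere_poly J \<alpha> \<noteq> 0} = insert (\<lambda>_. 0) ((\<lambda>j. single_exponent j 2) ` J)"
  using single_exponent_neq_zero[of 2] by (auto simp: sphere_poly_def)

lemma is_mpoly_coord_poly: "is_mpoly (coord_poly j)"
  by (simp add: is_mpoly_def coord_poly_support)

lemma is_mpoly_sphere_poly: "is_mpoly (sphere_poly (J::'n::finite set))"
  by (simp add: is_mpoly_def sphere_poly_support)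

text \<open>Stated over any real algebra, so as to cover both \<open>mpoly_eval\<close> and \<open>mpoly_ceval\<close>.\<close>

lemma coord_poly_sum:
  fixes x :: "'a::{comm_ring_1,real_algebra_1}^'n::finite"
  shows "(\<Sum>\<alpha>\<in>{\<alpha>. coord_poly j \<alpha> \<noteq> 0}. of_real (coord_poly j \<alpha>) * (\<Prod>i\<in>UNIV. (x $ i) ^ \<alpha> i)) = x $ j"
  by (simp add: coord_poly_support prod_single_exponent) (simp add: coord_poly_def)

lemma sphere_poly_single_exponent: "j \<in> J \<Longrightarrow> sphere_poly J (single_exponent j 2) = 1"
  by (simp add: sphere_poly_def single_exponent_neq_zero)

lemma sphere_poly_zero_exponent: "sphere_poly J (\<lambda>_. 0) = -1"
  by (simp add: sphere_poly_def)

lemma sphere_poly_sum: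
  fixes x :: "'a::{comm_ring_1,real_algebra_1}^'n::finite"
  shows "(\<Sum>\<alpha>\<in>{\<alpha>. sphere_poly J \<alpha> \<noteq> 0}. of_real (sphere_poly J \<alpha>) * (\<Prod>i\<in>UNIV. (x $ i) ^ \<alpha> i))
    = (\<Sum>j\<in>J. (x $ j)\<^sup>2) - 1"
proof -
  have inj: "inj_on (\<lambda>j. single_exponent j 2) J"
    by (simp add: inj_on_def single_exponent_eq_iff)
  have zero_notin: "(\<lambda>_. 0) \<notin> (\<lambda>j. single_exponent j 2) ` J"
    by (auto simp: single_exponent_def fun_eq_iff split: if_splits)
  have "(\<Sum>\<alpha>\<in>(\<lambda>j. single_exponent j 2) ` J. of_real (sphere_poly J \<alpha>) * (\<Prod>i\<in>UNIV. (x $ i) ^ \<alpha> i))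
      = (\<Sum>j\<in>J. (x $ j)\<^sup>2)"
    by (simp add: sum.reindex[OF inj] prod_single_exponent sphere_poly_single_exponent)
  then show ?thesis
    using zero_notin by (simp add: sphere_poly_support sphere_poly_zero_exponent)
qed
lemma mpoly_eval_coord_poly: "mpoly_eval (coord_poly j) = (\<lambda>x::real^'n::finite. x $ j)"
proof
  fix x :: "real^'n"
  show "mpoly_eval (coord_poly j) x = x $ j"
    using coord_poly_sum[of j x] by (simp add: mpoly_eval_def)
qed

lemma mpoly_ceval_coord_poly: "mpoly_ceval (coord_poly j) z = z $ j"
  using coord_poly_sum[where 'a=complex] by (simp add: mpoly_ceval_def)

lemma mpoly_eval_sphere_poly: "mpoly_eval (sphere_poly J) = (\<lambda>x::real^'n::finite. (\<Sum>j\<in>J. (x $ j)\<^sup>2) - 1)"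
proof
  fix x :: "real^'n"
  show "mpoly_eval (sphere_poly J) x = (\<Sum>j\<in>J. (x $ j)\<^sup>2) - 1"
    using sphere_poly_sum[of J x] by (simp add: mpoly_eval_def)
qed

lemma mpoly_ceval_sphere_poly: "mpoly_ceval (sphere_poly J) z = (\<Sum>j\<in>J. (z $ j)\<^sup>2) - 1"
  using sphere_poly_sum[where 'a=complex] by (simp add: mpoly_ceval_def)

lemma power2_norm_vec: "(norm (x::'a::real_normed_vector^'n::finite))\<^sup>2 = (\<Sum>i\<in>UNIV. (norm (x $ i))\<^sup>2)"
  unfolding norm_vec_def L2_set_def by (simp add: sum_nonneg)

lemma has_derivative_sphere_poly:
  fixes y :: "real^'n::finite"
  shows "(mpoly_eval (sphere_poly J) has_derivative (\<lambda>h. \<Sum>j\<in>J. 2 * y $ j * h $ j)) (at y)"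
proof -
  have "((\<lambda>x::real^'n. x $ j * x $ j) has_derivative (\<lambda>h. y $ j * h $ j + h $ j * y $ j)) (at y)" for j
    by (intro has_derivative_mult bounded_linear_imp_has_derivative bounded_linear_vec_nth)
  then have "((\<lambda>x::real^'n. (x $ j)\<^sup>2) has_derivative (\<lambda>h. 2 * y $ j * h $ j)) (at y)" for j
    by (simp add: power2_eq_square algebra_simps)
  then show ?thesis
    unfolding mpoly_eval_sphere_poly
    by (intro has_derivative_diff[where g'="\<lambda>_. 0", simplified] has_derivative_sum) auto
qed

lemma frechet_derivative_coord_poly:
  "frechet_derivative (mpoly_eval (coord_poly j)) (at y) = (\<lambda>h. h $ j)"
  unfolding mpoly_eval_coord_poly
  by (rule frechet_derivative_at[OF bounded_linear_imp_has_derivative[OF bounded_linear_vec_nth], symmetric])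

lemma frechet_derivative_sphere_poly:
  "frechet_derivative (mpoly_eval (sphere_poly J)) (at y) = (\<lambda>h. \<Sum>j\<in>J. 2 * y $ j * h $ j)"
  by (rule frechet_derivative_at[OF has_derivative_sphere_poly, symmetric])

lemma mpoly_grad_coord_poly: "mpoly_grad (coord_poly j) y = axis j 1"
  by (simp add: mpoly_grad_def frechet_derivative_coord_poly vec_eq_iff axis_def)

lemma mpoly_grad_sphere_poly:
  fixes y :: "real^'n::finite"
  shows "mpoly_grad (sphere_poly J) y = (\<chi> l. if l \<in> J then 2 * y $ l else 0)"
proof -
  have "(\<Sum>l\<in>J. 2 * y $ l * axis j 1 $ l) = (\<Sum>l\<in>J. if l = j then 2 * y $ l else 0)" for j
    by (rule sum.cong) (auto simp: axis_def)
  then show ?thesis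
    by (simp add: mpoly_grad_def frechet_derivative_sphere_poly vec_eq_iff sum.delta')
qed

lemma norm_mpoly_ceval_coord_poly_le:
  fixes z :: "complex^'n::finite"
  shows "norm (mpoly_ceval (coord_poly j) z) \<le> (norm z)\<^sup>2 + 1"
  using Finite_Cartesian_Product.norm_nth_le[of z j] zero_le_power2[of "norm z - 1/2"]
  by (simp add: mpoly_ceval_coord_poly power2_eq_square algebra_simps)

lemma norm_mpoly_ceval_sphere_poly_le:
  fixes z :: "complex^'n::finite"
  shows "norm (mpoly_ceval (sphere_poly J) z) \<le> (norm z)\<^sup>2 + 1"
proof -
  have "norm (\<Sum>j\<in>J. (z $ j)\<^sup>2) \<le> (\<Sum>j\<in>J. (norm (z $ j))\<^sup>2)"
    by (rule order_trans[OF norm_sum]) (simp add: norm_power)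
  also have "\<dots> \<le> (\<Sum>j\<in>UNIV. (norm (z $ j))\<^sup>2)"
    by (rule sum_mono2) auto
  finally show ?thesis
    unfolding mpoly_ceval_sphere_poly power2_norm_vec
    using norm_triangle_ineq4[of "\<Sum>j\<in>J. (z $ j)\<^sup>2" 1] by simp
qed

section \<open>The polynomial system cutting out the sphere\<close>

lemma knorm_nonneg: "0 \<le> knorm k w"
  by (simp add: knorm_def sum_nonneg)

definition sq_norm_on :: "'n set \<Rightarrow> real^'n \<Rightarrow> real" where
  "sq_norm_on J y = (\<Sum>j\<in>J. (y $ j)\<^sup>2)"

lemma sq_norm_on_nonneg: "0 \<le> sq_norm_on J y"
  by (simp add: sq_norm_on_def sum_nonneg)

lemma power2_norm_eq_sq_norm_on:
  fixes y :: "real^'n::finite"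
  shows "(norm y)\<^sup>2 = sq_norm_on J y + sq_norm_on (-J) y"
  using sum.subset_diff[of J UNIV "\<lambda>j. (y $ j)\<^sup>2"]
  by (simp add: power2_norm_vec sq_norm_on_def Compl_eq_Diff_UNIV add.commute)

lemma mem_coord_sphere_iff:
  "y \<in> coord_sphere J \<longleftrightarrow> sq_norm_on J y = 1 \<and> (\<forall>l. l \<notin> J \<longrightarrow> y $ l = 0)"
proof -
  have "sq_norm_on (-J) y = 0" if "\<forall>l. l \<notin> J \<longrightarrow> y $ l = 0"
    using that by (simp add: sq_norm_on_def)
  moreover have "norm y = 1 \<longleftrightarrow> (norm y)\<^sup>2 = 1"
    using norm_ge_zero[of y] power2_eq_1_iff[of "norm y"] by linarith
  ultimately show ?thesis
    using power2_norm_eq_sq_norm_on[of y J] by (auto simp: coord_sphere_def)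
qed

lemma compact_coord_sphere: "compact (coord_sphere J :: (real^'n::finite) set)"
proof -
  have "coord_sphere J = sphere 0 1 \<inter> (\<Inter>i\<in>-J. {x::real^'n. x $ i = 0})"
    by (auto simp: coord_sphere_def)
  moreover have "closed (\<Inter>i\<in>-J. {x::real^'n. x $ i = 0})"
    by (intro closed_INT ballI closed_Collect_eq continuous_intros)
  ultimately show ?thesis
    by (simp add: compact_Int_closed)
qed

definition sphere_system :: "'n set \<Rightarrow> (nat \<Rightarrow> 'n) \<Rightarrow> nat \<Rightarrow> 'n mpoly_coeffs" where
  "sphere_system J e i = (if i = 0 then sphere_poly J else coord_poly (e i))"

lemma L2sq_sphere_system_le:
  fixes J :: "'n::finite set"
  shows "L2sq k (sphere_system J e) \<le> real k * pi ^ CARD('n)"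
proof -
  have "L2sq k (sphere_system J e) \<le> (\<Sum>i<k. sqrt pi ^ DIM(complex^'n))"
    unfolding L2sq_def
  proof (rule sum_mono)
    fix i
    show "(\<integral>z. (cmod (mpoly_ceval (sphere_system J e i) z))\<^sup>2 * exp (- pi * (norm z)\<^sup>2) \<partial>lborel)
        \<le> sqrt pi ^ DIM(complex^'n)"
      by (rule gaussian_weighted_L2_le)
         (simp add: sphere_system_def norm_mpoly_ceval_sphere_poly_le norm_mpoly_ceval_coord_poly_le)
  qed
  also have "sqrt pi ^ DIM(complex^'n) = (sqrt pi ^ 2) ^ CARD('n)"
    by (simp only: DIM_cart DIM_complex mult.commute[of "CARD('n)"] power_mult)
  finally show ?thesis by simp
qed

context
  fixes J :: "'n::finite set" and k :: nat and e :: "nat \<Rightarrow> 'n"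
  assumes k_ge_1: "1 \<le> k" and e_bij: "bij_betw e {1..<k} (-J)"
begin

lemma lessThan_eq_insert_0: "{..<k} = insert 0 {1..<k}"
  using k_ge_1 by auto

lemma e_notin: "i \<in> {1..<k} \<Longrightarrow> e i \<notin> J"
  using e_bij by (auto simp: bij_betw_def)

lemma sum_compl_reindex: "(\<Sum>l\<in>-J. f l) = (\<Sum>i\<in>{1..<k}. f (e i))"
  using sum.reindex_bij_betw[OF e_bij, of f] by simp

lemma sum_axis_nth:
  fixes w :: "nat \<Rightarrow> real"
  shows "(\<Sum>i\<in>{1..<k}. w i * axis (e i) 1 $ l) = (if l \<in> J then 0 else w (the_inv_into {1..<k} e l))"
proof (cases "l \<in> J")
  case True
  then show ?thesis using e_notin by (auto simp: axis_def intro!: sum.neutral)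
next
  case False
  define i0 where "i0 = the_inv_into {1..<k} e l"
  have inj: "inj_on e {1..<k}" and l_img: "l \<in> e ` {1..<k}"
    using False e_bij by (auto simp: bij_betw_def)
  have i0: "i0 \<in> {1..<k}" "e i0 = l"
    unfolding i0_def using the_inv_into_into[OF inj l_img order_refl] f_the_inv_into_f[OF inj l_img]
    by auto
  have "(\<Sum>i\<in>{1..<k}. w i * axis (e i) 1 $ l) = (\<Sum>i\<in>{1..<k}. if i = i0 then w i else 0)"
    using e_bij i0 by (intro sum.cong) (auto simp: axis_def bij_betw_def inj_on_def)
  then show ?thesis using False i0 by (simp add: i0_def)
qed

lemma power2_knorm: "(knorm k w)\<^sup>2 = (w 0)\<^sup>2 + (\<Sum>i\<in>{1..<k}. (w i)\<^sup>2)"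
  unfolding knorm_def lessThan_eq_insert_0 by (simp add: sum_nonneg)

lemma power2_knorm_Pval:
  "(knorm k (Pval k (sphere_system J e) y))\<^sup>2 = (sq_norm_on J y - 1)\<^sup>2 + sq_norm_on (-J) y"
  using k_ge_1
  by (simp add: power2_knorm sum_compl_reindex sq_norm_on_def Pval_def sphere_system_def
      mpoly_eval_sphere_poly mpoly_eval_coord_poly)

lemma dP_adj_sphere_system_nth:
  "dP_adj k (sphere_system J e) y w $ l
     = (if l \<in> J then 2 * w 0 * y $ l else w (the_inv_into {1..<k} e l))"
proof -
  have "dP_adj k (sphere_system J e) y w
      = w 0 *\<^sub>R (\<chi> l. if l \<in> J then 2 * y $ l else 0) + (\<Sum>i\<in>{1..<k}. w i *\<^sub>R axis (e i) 1)"
    unfolding dP_adj_def lessThan_eq_insert_0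
    by (simp add: sphere_system_def mpoly_grad_sphere_poly mpoly_grad_coord_poly)
  then show ?thesis using sum_axis_nth[of w l] by simp
qed

lemma power2_norm_dP_adj:
  "(norm (dP_adj k (sphere_system J e) y w))\<^sup>2
     = 4 * (w 0)\<^sup>2 * sq_norm_on J y + (\<Sum>i\<in>{1..<k}. (w i)\<^sup>2)"
proof -
  let ?v = "dP_adj k (sphere_system J e) y w"
  have "(norm ?v)\<^sup>2 = (\<Sum>l\<in>J. (?v $ l)\<^sup>2) + (\<Sum>i\<in>{1..<k}. (?v $ e i)\<^sup>2)"
    by (simp add: power2_norm_eq_sq_norm_on[of ?v J] sq_norm_on_def sum_compl_reindex)
  also have "(\<Sum>l\<in>J. (?v $ l)\<^sup>2) = 4 * (w 0)\<^sup>2 * sq_norm_on J y"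
    unfolding sq_norm_on_def sum_distrib_left
    by (rule sum.cong) (auto simp: dP_adj_sphere_system_nth power_mult_distrib)
  also have "(\<Sum>i\<in>{1..<k}. (?v $ e i)\<^sup>2) = (\<Sum>i\<in>{1..<k}. (w i)\<^sup>2)"
    using e_bij e_notin
    by (intro sum.cong) (auto simp: dP_adj_sphere_system_nth bij_betw_def the_inv_into_f_f)
  finally show ?thesis .
qed

lemma zero_set_sphere_system: "zero_set k (sphere_system J e) U = U \<inter> coord_sphere J"
proof -
  have "(\<forall>i<k. mpoly_eval (sphere_system J e i) y = 0) \<longleftrightarrow> y \<in> coord_sphere J" for y
  proof -
    have "(\<forall>i<k. mpoly_eval (sphere_system J e i) y = 0)
        \<longleftrightarrow> sq_norm_on J y = 1 \<and> (\<forall>i\<in>{1..<k}. y $ e i = 0)"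
      using k_ge_1 by (auto simp: sphere_system_def mpoly_eval_sphere_poly
          mpoly_eval_coord_poly sq_norm_on_def)
    also have "(\<forall>i\<in>{1..<k}. y $ e i = 0) \<longleftrightarrow> (\<forall>l\<in>e ` {1..<k}. y $ l = 0)"
      by simp
    also have "\<dots> \<longleftrightarrow> (\<forall>l. l \<notin> J \<longrightarrow> y $ l = 0)"
      using e_bij by (auto simp: bij_betw_def)
    finally show ?thesis by (simp add: mem_coord_sphere_iff)
  qed
  then show ?thesis by (auto simp: zero_set_def)
qed

lemma zero_set_sphere_system_ball: "zero_set k (sphere_system J e) (ball 0 2) = coord_sphere J"
  by (auto simp: zero_set_sphere_system coord_sphere_def)

lemma sphere_system_derivative_surj:
  assumes "y \<in> coord_sphere J"
  shows "\<exists>h. \<forall>i<k. frechet_derivative (mpoly_eval (sphere_system J e i)) (at y) h = w i"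
proof -
  define h :: "real^'n"
    where "h = (\<chi> l. if l \<in> J then w 0 / 2 * y $ l else w (the_inv_into {1..<k} e l))"
  have "(\<Sum>j\<in>J. 2 * y $ j * h $ j) = w 0 * sq_norm_on J y"
    unfolding sq_norm_on_def sum_distrib_left
    by (rule sum.cong) (auto simp: h_def power2_eq_square)
  then have "frechet_derivative (mpoly_eval (sphere_system J e 0)) (at y) h = w 0"
    using assms by (simp add: sphere_system_def frechet_derivative_sphere_poly mem_coord_sphere_iff)
  moreover have "frechet_derivative (mpoly_eval (sphere_system J e i)) (at y) h = w i"
    if i: "i \<in> {1..<k}" for i
  proof -
    have "the_inv_into {1..<k} e (e i) = i"
      using e_bij i by (simp add: bij_betw_def the_inv_into_f_f)
    then show ?thesis
      using e_notin[OF i] i by (simp add: sphere_system_def frechet_derivative_coord_poly h_def)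
  qed
  ultimately have "\<forall>i<k. frechet_derivative (mpoly_eval (sphere_system J e i)) (at y) h = w i"
    by (metis atLeastLessThan_iff less_one not_less)
  then show ?thesis ..
qed

lemma regular_pair_sphere_system: "regular_pair k (ball 0 2) (sphere_system J e)"
proof -
  have "\<forall>i<k. is_mpoly (sphere_system J e i)"
    by (simp add: sphere_system_def is_mpoly_sphere_poly is_mpoly_coord_poly)
  then show ?thesis
    unfolding regular_pair_def zero_set_sphere_system_ball
    using compact_coord_sphere sphere_system_derivative_surj by simp
qed

lemma knorm_Pval_sphere_system_ge:
  assumes "3 / 2 < norm y"
  shows "1 / 2 \<le> knorm k (Pval k (sphere_system J e) y)"
proof -
  have "(3 / 2)\<^sup>2 < (norm y)\<^sup>2"
    using assms by (intro power_strict_mono) auto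
  then have "9 / 4 < sq_norm_on J y + sq_norm_on (-J) y"
    by (simp add: power2_norm_eq_sq_norm_on[of y J] power_divide)
  then have "1 / 4 \<le> (sq_norm_on J y - 1)\<^sup>2 + sq_norm_on (-J) y"
  proof (cases "1 / 4 \<le> sq_norm_on (-J) y")
    case True
    then show ?thesis by (simp add: add_increasing)
  next
    case False
    with \<open>9 / 4 < sq_norm_on J y + sq_norm_on (-J) y\<close> have "1 \<le> (sq_norm_on J y - 1)\<^sup>2"
      by (simp add: one_le_power)
    then show ?thesis using sq_norm_on_nonneg[of "-J" y] by simp
  qed
  then have "(1 / 2)\<^sup>2 \<le> (knorm k (Pval k (sphere_system J e) y))\<^sup>2"
    by (simp add: power2_knorm_Pval power_divide)
  then show ?thesis
    by (rule power2_le_imp_le) (rule knorm_nonneg)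
qed

text \<open>Where \<open>|P| < 1/4\<close> we have \<open>|y\<^sub>J|\<^sup>2 > 3/4\<close>, so the gradient of \<open>P\<^sub>0\<close> has length \<open>> 1\<close>.\<close>
lemma norm_dP_adj_sphere_system_ge:
  assumes "knorm k (Pval k (sphere_system J e) y) < 1 / 4"
  shows "knorm k w \<le> norm (dP_adj k (sphere_system J e) y w)"
proof -
  have "(knorm k (Pval k (sphere_system J e) y))\<^sup>2 < (1 / 4)\<^sup>2"
    using assms knorm_nonneg by (intro power_strict_mono) auto
  then have "(sq_norm_on J y - 1)\<^sup>2 < (1 / 4)\<^sup>2"
    using sq_norm_on_nonneg[of "-J" y] by (simp add: power2_knorm_Pval)
  then have "3 / 4 < sq_norm_on J y"
  proof (rule contrapos_pp)
    assume "\<not> 3 / 4 < sq_norm_on J y"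
    then have "(1 / 4)\<^sup>2 \<le> (1 - sq_norm_on J y)\<^sup>2"
      by (intro power_mono) auto
    then show "\<not> (sq_norm_on J y - 1)\<^sup>2 < (1 / 4)\<^sup>2"
      by (simp add: power2_commute)
  qed
  then have "(w 0)\<^sup>2 \<le> 4 * (w 0)\<^sup>2 * sq_norm_on J y"
    using mult_left_mono[of 1 "4 * sq_norm_on J y" "(w 0)\<^sup>2"] by simp
  then have "(knorm k w)\<^sup>2 \<le> (norm (dP_adj k (sphere_system J e) y w))\<^sup>2"
    by (simp add: power2_knorm power2_norm_dP_adj)
  then show ?thesis
    by (rule power2_le_imp_le) simp
qed

lemma sphere_system_in_Tset: "(1 / 4, 1) \<in> Tset k (ball 0 2) (sphere_system J e)"
proof -
  have "\<forall>y\<in>ball 0 2 - cball 0 (3 / 2). 1 / 2 \<le> knorm k (Pval k (sphere_system J e) y)"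
    using knorm_Pval_sphere_system_ge by (simp add: not_le)
  then have "\<exists>K. compact K \<and> K \<subseteq> ball 0 2 \<and>
      (\<exists>\<delta>'>1 / 4. \<forall>y\<in>ball 0 2 - K. \<delta>' \<le> knorm k (Pval k (sphere_system J e) y))"
    by (intro exI[of _ "cball 0 (3 / 2)"] conjI exI[of _ "1 / 2"]) auto
  then show ?thesis
    unfolding Tset_def using norm_dP_adj_sphere_system_ge by auto
qed

end

section \<open>Bounds on the ingredients of the constant\<close>

lemma Rpair_ball_le:
  assumes "0 < r"
  shows "Rpair (ball (0::real^'n::finite) r) \<le> max 1 r"
proof -
  have "(SUP y\<in>ball (0::real^'n) r. norm y) \<le> r"
    using assms by (intro cSUP_least) (auto simp: less_imp_le)
  then show ?thesis by (auto simp: Rpair_def)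
qed

lemma rho_nonneg: "0 \<le> R \<Longrightarrow> 0 \<le> rho n R"
  unfolding rho_def by (intro cINF_greatest) auto

lemma rho_le:
  assumes "0 \<le> R" "R \<le> 2"
  shows "rho n R \<le> 9 ^ n * exp 36"
proof -
  let ?h = "\<lambda>s. (R + s) ^ (2 * n) / s ^ (2 * n) * exp (pi * (R + s)\<^sup>2)"
  have "rho n R \<le> ?h 1"
    unfolding rho_def using assms by (intro cINF_lower bdd_belowI2[of _ 0]) auto
  also have "\<dots> \<le> 3 ^ (2 * n) * exp (9 * 4)"
  proof (intro mult_mono)
    show "(R + 1) ^ (2 * n) / 1 ^ (2 * n) \<le> 3 ^ (2 * n)"
      using assms by (simp add: power_mono)
    have "(R + 1)\<^sup>2 \<le> 3\<^sup>2"
      using assms by (intro power_mono) auto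
    then have "pi * (R + 1)\<^sup>2 \<le> 4 * 9"
      using pi_less_4 by (intro mult_mono) auto
    then show "exp (pi * (R + 1)\<^sup>2) \<le> exp (9 * 4)"
      by simp
  qed auto
  finally show ?thesis by (simp add: power_mult)
qed

lemma measure_ball_le:
  assumes "0 \<le> R"
  shows "measure lborel (ball (0::real^'n::finite) R) \<le> (2 * R) ^ CARD('n)"
proof -
  let ?a = "(\<chi> i. - R) :: real^'n" and ?b = "(\<chi> i. R) :: real^'n"
  have "ball 0 R \<subseteq> cbox ?a ?b"
  proof
    fix x :: "real^'n"
    assume "x \<in> ball 0 R"
    then have "\<bar>x $ i\<bar> \<le> R" for i
      using component_le_norm_cart[of x i] by simp
    then have "- R \<le> x $ i \<and> x $ i \<le> R" for i
      by (metis abs_le_iff minus_le_iff)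
    then show "x \<in> cbox ?a ?b"
      by (simp add: mem_box_cart)
  qed
  then have "measure lborel (ball (0::real^'n) R) \<le> measure lborel (cbox ?a ?b)"
    by (intro measure_mono_fmeasurable) auto
  also have "\<dots> = (2 * R) ^ CARD('n)"
  proof -
    have "0 \<in> cbox ?a ?b"
      using assms by (simp add: mem_box_cart)
    then have "cbox ?a ?b \<noteq> {}" by blast
    then show ?thesis by (simp add: content_cbox_cart)
  qed
  finally show ?thesis .
qed

lemma L2sq_nonneg: "0 \<le> L2sq k P"
  unfolding L2sq_def by (intro sum_nonneg integral_nonneg_AE) auto

lemma tau_nonneg:
  fixes U :: "(real^'n::finite) set"
  assumes "p \<in> Tset k U P"
  shows "0 \<le> tau k U P"
proof -
  have "0 \<le> (INF q\<in>Tset k U P. 1 / (fst q)\<^sup>2 + pi * real CARD('n) / (snd q)\<^sup>2)"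
    using assms by (intro cINF_greatest) auto
  then show ?thesis
    unfolding tau_def using rho_nonneg[of "Rpair U" "CARD('n)"] L2sq_nonneg[of k P]
    by (simp add: Rpair_def)
qed

lemma tau_le:
  fixes U :: "(real^'n::finite) set"
  assumes p: "p \<in> Tset k U P" and rho: "rho CARD('n) (Rpair U) \<le> A" and L2: "L2sq k P \<le> B"
  shows "tau k U P \<le> 24 * real k * A * B * (1 / (fst p)\<^sup>2 + pi * real CARD('n) / (snd p)\<^sup>2)"
proof -
  let ?f = "\<lambda>q. 1 / (fst q)\<^sup>2 + pi * real CARD('n) / (snd q)\<^sup>2"
  have inf_le: "(INF q\<in>Tset k U P. ?f q) \<le> ?f p"
    using p by (intro cINF_lower bdd_belowI2[of _ 0]) auto
  have inf_ge: "0 \<le> (INF q\<in>Tset k U P. ?f q)"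
    using p by (intro cINF_greatest) auto
  have rho_ge: "0 \<le> rho CARD('n) (Rpair U)"
    by (rule rho_nonneg) (simp add: Rpair_def)
  have "24 * real k * rho CARD('n) (Rpair U) \<le> 24 * real k * A"
    using rho by (intro mult_left_mono) auto
  then have "24 * real k * rho CARD('n) (Rpair U) * L2sq k P \<le> 24 * real k * A * B"
    using rho rho_ge L2sq_nonneg[of k P] by (intro mult_mono L2) auto
  then show ?thesis
    unfolding tau_def using rho rho_ge L2sq_nonneg[of k P] L2 inf_ge
    by (intro mult_mono inf_le) auto
qed

lemma c_Sigma_ge:
  fixes U :: "(real^'n::finite) set"
  assumes "(U, P) \<in> I_set k \<Sigma>" "p \<in> Tset k U P"
  shows "ereal (m_tau (tau k U P) / (2 ^ CARD('n) * measure lborel (ball (0::real^'n) (Rpair U))))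
    \<le> c_Sigma k \<Sigma>"
  unfolding c_Sigma_def using assms by (intro SUP_upper2[where i="(U, P)"]) auto

lemma m_tau_div_volume_ge:
  assumes "0 \<le> \<tau>" "\<tau> \<le> T" "0 < R" "R \<le> 2"
  shows "exp (- (4 * T + 4)) / (2 * sqrt pi * 8 ^ CARD('n))
    \<le> m_tau \<tau> / (2 ^ CARD('n) * measure lborel (ball (0::real^'n::finite) R))"
proof -
  let ?V = "measure lborel (ball (0::real^'n) R)"
  have V_pos: "0 < ?V"
    using content_ball_pos[OF assms(3)] by simp
  have "?V \<le> (2 * R) ^ CARD('n)"
    using assms(3) by (intro measure_ball_le) simp
  also have "\<dots> \<le> 4 ^ CARD('n)"
    using assms by (intro power_mono) auto
  finally have V_le: "?V \<le> 4 ^ CARD('n)" .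
  have m: "exp (- (4 * T + 4)) / (2 * sqrt pi) \<le> m_tau \<tau>"
    by (rule m_tau_ge[OF assms(1,2)])
  have "exp (- (4 * T + 4)) / (2 * sqrt pi * 8 ^ CARD('n))
      = exp (- (4 * T + 4)) / (2 * sqrt pi) / (2 ^ CARD('n) * 4 ^ CARD('n))"
    by (simp add: power_mult_distrib[symmetric])
  also have "\<dots> \<le> m_tau \<tau> / (2 ^ CARD('n) * 4 ^ CARD('n))"
    using m by (intro divide_right_mono) auto
  also have "\<dots> \<le> m_tau \<tau> / (2 ^ CARD('n) * ?V)"
    using V_pos V_le m order_trans[OF _ m, of 0]
    by (intro divide_left_mono mult_left_mono mult_pos_pos) auto
  finally show ?thesis .
qed

section \<open>Numerical estimates\<close>

lemma cube_le_three_pow: "n ^ 3 \<le> (3::nat) ^ n"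
proof (cases "n \<le> 2")
  case True
  then have "n \<in> {0, 1, 2}" by auto
  then show ?thesis by auto
next
  case False
  then have "3 \<le> n" by simp
  then show ?thesis
  proof (induction n rule: nat_induct_at_least)
    case base
    then show ?case by simp
  next
    case (Suc n)
    have "3 * n\<^sup>2 \<le> n ^ 3"
      using Suc.hyps mult_right_mono[of 3 n "n\<^sup>2"] by (simp add: power2_eq_square power3_eq_cube)
    moreover have "3 * n + 1 \<le> n ^ 3"
    proof -
      have "9 \<le> n * n"
        using Suc.hyps mult_le_mono[of 3 n 3 n] by simp
      then have "9 * n \<le> n * n * n"
        by (rule mult_right_mono) simp
      then show ?thesis
        unfolding power3_eq_cube using Suc.hyps by linarith
    qed
    moreover have "Suc n ^ 3 = n ^ 3 + 3 * n\<^sup>2 + 3 * n + 1"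
      by (simp add: power3_eq_cube power2_eq_square algebra_simps)
    ultimately have "Suc n ^ 3 \<le> 3 * n ^ 3"
      by linarith
    also have "\<dots> \<le> 3 * 3 ^ n"
      using Suc.IH by simp
    finally show ?case by simp
  qed
qed

lemma cube_mul_pow_le_exp: "real n ^ 3 * 36 ^ n \<le> exp (5 * real n)"
proof -
  have "(108::real) \<le> exp 5"
  proof -
    have "(13 / 8) ^ 10 \<le> exp (1 / 2 :: real) ^ 10"
      using exp_lower_Taylor_quadratic[of "1 / 2 :: real"] by (intro power_mono) (auto simp: power2_eq_square)
    also have "\<dots> = exp 5"
      by (simp flip: exp_of_nat_mult)
    finally show ?thesis by (simp add: power_divide)
  qed
  have "real n ^ 3 * 36 ^ n \<le> 3 ^ n * 36 ^ n"
    using cube_le_three_pow[of n] by (intro mult_right_mono) (auto simp flip: of_nat_power)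
  also have "\<dots> = 108 ^ n"
    by (simp flip: power_mult_distrib)
  also have "\<dots> \<le> exp 5 ^ n"
    using \<open>108 \<le> exp 5\<close> by (intro power_mono) auto
  also have "\<dots> = exp (5 * real n)"
    by (simp flip: exp_of_nat_mult add: mult.commute)
  finally show ?thesis .
qed

lemma tau_bound_le_exp:
  fixes n k :: nat
  assumes "1 \<le> k" "k \<le> n"
  shows "4 * (24 * real k * (9 ^ n * exp 36) * (real k * pi ^ n) * (16 + pi * real n)) + 6 + 3 * real n
    \<le> exp (54 + 5 * real n)"
proof -
  define N where "N = real n"
  define X where "X = N ^ 3 * 36 ^ n"
  have N_ge: "1 \<le> N" and k_le: "real k \<le> N"
    using assms by (auto simp: N_def)
  have X_ge: "N \<le> X"
  proof -
    have "N * 1 \<le> N * (N * N)"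
      using N_ge mult_mono[OF N_ge N_ge] by (intro mult_left_mono) auto
    also have "\<dots> \<le> N ^ 3 * 36 ^ n"
      using N_ge by (simp add: power3_eq_cube)
    finally show ?thesis by (simp add: X_def)
  qed
  have kk: "real k * real k \<le> N * N"
    using k_le by (intro mult_mono) auto
  have pow: "9 ^ n * pi ^ n \<le> (36::real) ^ n"
  proof -
    have "(9 * pi) ^ n \<le> 36 ^ n"
      using pi_less_4 by (intro power_mono) auto
    then show ?thesis by (simp add: power_mult_distrib)
  qed
  have "pi * N \<le> 4 * N"
    using pi_less_4 N_ge by (intro mult_right_mono) auto
  then have lin: "16 + pi * N \<le> 20 * N"
    using N_ge by linarith
  have "(9 ^ n * pi ^ n) * (16 + pi * N) \<le> 36 ^ n * (20 * N)"
    by (rule mult_mono[OF pow lin]) (use N_ge in auto)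
  then have prod: "(real k * real k) * ((9 ^ n * pi ^ n) * (16 + pi * N)) \<le> (N * N) * (36 ^ n * (20 * N))"
    by (rule mult_mono[OF kk]) (use N_ge in auto)
  have T: "24 * real k * (9 ^ n * exp 36) * (real k * pi ^ n) * (16 + pi * N) \<le> 480 * exp 36 * X"
    using mult_left_mono[OF prod, of "24 * exp 36"]
    by (simp add: X_def power3_eq_cube algebra_simps)
  have e18: "(1929::real) \<le> exp 18"
  proof -
    have "(101 / 2) ^ 2 \<le> exp (9::real) ^ 2"
      using exp_lower_Taylor_quadratic[of "9::real"] by (intro power_mono) (auto simp: power2_eq_square)
    then show ?thesis by (simp flip: exp_of_nat_mult add: power_divide)
  qed
  have "9 * X \<le> 9 * exp 36 * X"
    using N_ge X_ge by (intro mult_right_mono) auto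
  moreover have "1929 * exp 36 * X \<le> exp 18 * exp 36 * exp (5 * N)"
    using e18 N_ge X_ge cube_mul_pow_le_exp[of n] unfolding X_def N_def
    by (intro mult_mono) auto
  moreover have "exp 18 * exp 36 * exp (5 * N) = exp (54 + 5 * N)"
    by (simp add: exp_add[symmetric])
  ultimately have "4 * (480 * exp 36 * X) + 6 + 3 * N \<le> exp (54 + 5 * N)"
    using N_ge X_ge by linarith
  then show ?thesis
    using T unfolding N_def by linarith
qed

lemma exp_neg_exp_le:
  assumes "4 * T + 6 + 3 * real n \<le> E"
  shows "exp (- E) \<le> exp (- (4 * T + 4)) / (2 * sqrt pi * 8 ^ n)"
proof -
  have "2 * sqrt pi \<le> exp (2::real)"
  proof -
    have "2 * sqrt pi \<le> 2 * sqrt 4"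
      using pi_less_4 by (intro mult_left_mono real_sqrt_le_mono) auto
    also have "\<dots> \<le> exp 2"
      using exp_lower_Taylor_quadratic[of "2::real"] by simp
    finally show ?thesis .
  qed
  moreover have "(8::real) ^ n \<le> exp (3 * real n)"
  proof -
    have "(8::real) \<le> exp 3"
      using exp_lower_Taylor_quadratic[of "3::real"] by (simp add: power2_eq_square)
    then have "(8::real) ^ n \<le> exp 3 ^ n"
      by (intro power_mono) auto
    then show ?thesis by (simp flip: exp_of_nat_mult add: mult.commute)
  qed
  ultimately have "2 * sqrt pi * 8 ^ n \<le> exp 2 * exp (3 * real n)"
    by (intro mult_mono) auto
  have "exp (- E) \<le> exp (- (4 * T + 4) - 2 - 3 * real n)"
    using assms by simp
  also have "\<dots> = exp (- (4 * T + 4)) / (exp 2 * exp (3 * real n))"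
    by (simp only: exp_diff divide_divide_eq_left)
  also have "\<dots> \<le> exp (- (4 * T + 4)) / (2 * sqrt pi * 8 ^ n)"
    using \<open>2 * sqrt pi * 8 ^ n \<le> exp 2 * exp (3 * real n)\<close> by (intro divide_left_mono) auto
  finally show ?thesis .
qed

theorem proposition2p16:
  fixes k :: nat and J :: "'n::finite set"
  assumes "1 \<le> k" and "k \<le> CARD('n)" and "card J = CARD('n) - k + 1"
  shows "c_Sigma k (coord_sphere J :: (real^'n) set) \<ge> ereal (exp (- exp (54 + 5 * real CARD('n))))"
proof -
  have "card (-J) = card {1..<k}"
    using assms card_Diff_subset[of J UNIV] by (simp add: Compl_eq_Diff_UNIV)
  then obtain e where e: "bij_betw e {1..<k} (-J)"
    using finite_same_card_bij[of "{1..<k}" "-J"] by auto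
  define U :: "(real^'n) set" where "U = ball 0 2"
  define P where "P = sphere_system J e"
  define T where "T = 24 * real k * (9 ^ CARD('n) * exp 36) * (real k * pi ^ CARD('n)) * (16 + pi * real CARD('n))"
  have UP: "(U, P) \<in> I_set k (coord_sphere J)"
    using regular_pair_sphere_system[OF assms(1) e] zero_set_sphere_system_ball[OF assms(1) e]
      ambient_isotopic_refl by (auto simp: I_set_def U_def P_def)
  have p: "(1 / 4, 1) \<in> Tset k U P"
    unfolding U_def P_def by (rule sphere_system_in_Tset[OF assms(1) e])
  have R: "0 < Rpair U" "Rpair U \<le> 2"
    using Rpair_ball_le[of 2] by (auto simp: U_def Rpair_def)
  have rho: "rho CARD('n) (Rpair U) \<le> 9 ^ CARD('n) * exp 36"
    using R by (intro rho_le) auto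
  have "tau k U P \<le> T"
    using tau_le[OF p rho L2sq_sphere_system_le[of k J e, folded P_def]] by (simp add: T_def power_divide)
  then have "exp (- exp (54 + 5 * real CARD('n)))
      \<le> m_tau (tau k U P) / (2 ^ CARD('n) * measure lborel (ball (0::real^'n) (Rpair U)))"
    using exp_neg_exp_le[OF tau_bound_le_exp[OF assms(1,2)]] m_tau_div_volume_ge[OF tau_nonneg[OF p] _ R]
    unfolding T_def by (meson order_trans)
  then show ?thesis
    using c_Sigma_ge[OF UP p] by (meson ereal_less_eq(3) order_trans)
qed

end
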